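(* Let $n,m_1,m_2$ be positive integers with $m_2 \geq n \geq \lceil \log m_1 \rceil+\lceil \log m_2 \rceil+2$. Let $K_{X,Y,Z}$ be the complete $3$-partite graph with parts $X,Y,Z$ of sizes $|X|=|Y|=32m_1+49m_2$ and $|Z|=m_1+m_2-1$. Then for every coloring of the edges of $K_{X,Y,Z}$ with red and blue there is a red copy of $C_n$ or a blue copy of $K_{m_1,m_2}$.
   Context: $C_n$ is the cycle on $n$ vertices and $K_{a,b}$ the complete bipartite graph with parts of sizes $a$ and $b$. $\log$ denotes the logarithm to base $2$. *)

theory Defs
  imports Complex_Main
begin

text \<open>Edge relation of the complete 3-partite graph with parts X, Y, Z
  (the parts are assumed pairwise disjoint where used).\<close>
definition tripartite_edge :: "'a set \<Rightarrow> 'a set \<Rightarrow> 'a set \<Rightarrow> 'a \<Rightarrow> 'a \<Rightarrow> bool" where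
  "tripartite_edge X Y Z u v \<longleftrightarrow>
     (u \<in> X \<and> v \<in> Y) \<or> (u \<in> Y \<and> v \<in> X) \<or>
     (u \<in> X \<and> v \<in> Z) \<or> (u \<in> Z \<and> v \<in> X) \<or>
     (u \<in> Y \<and> v \<in> Z) \<or> (u \<in> Z \<and> v \<in> Y)"

text \<open>A red/blue colouring of the edges is given by the predicate
  red on unordered pairs {u,v}; an edge is blue iff it is not red.\<close>

definition has_red_cycle ::
  "('a \<Rightarrow> 'a \<Rightarrow> bool) \<Rightarrow> ('a set \<Rightarrow> bool) \<Rightarrow> nat \<Rightarrow> bool" where
  "has_red_cycle E red n \<longleftrightarrow>
     (\<exists>v :: nat \<Rightarrow> 'a. inj_on v {..<n} \<and>
        (\<forall>i<n. E (v i) (v (Suc i mod n)) \<and> red {v i, v (Suc i mod n)}))"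

definition has_blue_Kab ::
  "('a \<Rightarrow> 'a \<Rightarrow> bool) \<Rightarrow> ('a set \<Rightarrow> bool) \<Rightarrow> nat \<Rightarrow> nat \<Rightarrow> bool" where
  "has_blue_Kab E red a b \<longleftrightarrow>
     (\<exists>A B. finite A \<and> finite B \<and> card A = a \<and> card B = b \<and> A \<inter> B = {} \<and>
        (\<forall>x\<in>A. \<forall>y\<in>B. E x y \<and> \<not> red {x, y}))"

end

theory Submission
  imports Defs "HOL-Library.Disjoint_Sets"
begin

text \<open>
Let \<open>m \<le> M\<close> be the minimum and maximum of \<open>m1, m2\<close>. Without a blue \<open>K(m1, m2)\<close>, any \<open>m\<close>
vertices and any \<open>M\<close> vertices in different parts span a red edge. Split \<open>X\<close> and \<open>Y\<close> into a small
and a large piece each. Depth-first search in the red bipartite graph on the small pieces gives a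
long red path \<open>P\<close>: the search ends with a finished and an unvisited half of equal size and no red
edge between them, so both are small. On the large pieces, deleting fewer than \<open>2m\<close> vertices leaves
a red graph in which every set of fewer than \<open>2m\<close> vertices has eight times as many neighbours.
Take two vertices of \<open>P\<close> at distance \<open>q\<close> with at least four neighbours there and grow two disjoint
binary trees of depth \<open>a \<approx> log m\<close> from them. The red neighbours of one leaf level contain \<open>M\<close>
unused vertices; a red edge from these to the other leaf level (\<open>n\<close> even) or a common red neighbour
in \<open>Z\<close> (\<open>n\<close> odd) closes a red cycle of length \<open>q + 2a + 2\<close> (resp. \<open>+ 3\<close>), which is \<open>n\<close>.
\<close>

section \<open>Paths and cycles\<close>

lemma has_red_cycle_of_list:
  assumes "distinct cs" "cs \<noteq> []"
    and "successively (\<lambda>u v. E u v \<and> red {u, v}) cs"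
    and "E (last cs) (hd cs)" "red {last cs, hd cs}"
  shows "has_red_cycle E red (length cs)"
  unfolding has_red_cycle_def
proof (intro exI[of _ "(!) cs"] conjI allI impI)
  show "inj_on ((!) cs) {..<length cs}"
    using assms(1) by (simp add: inj_on_def nth_eq_iff_index_eq)
  fix i assume i: "i < length cs"
  have "E (cs ! i) (cs ! (Suc i mod length cs)) \<and> red {cs ! i, cs ! (Suc i mod length cs)}"
  proof (cases "Suc i < length cs")
    case True
    then show ?thesis using successively_nth[OF assms(3)] by simp
  next
    case False
    then have "Suc i = length cs" using i by simp
    then have "i = length cs - 1" "Suc i mod length cs = 0" by simp_all
    then have "cs ! i = last cs" "cs ! (Suc i mod length cs) = hd cs"
      using assms(2) by (simp_all add: last_conv_nth hd_conv_nth)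
    then show ?thesis using assms(4,5) by simp
  qed
  then show "E (cs ! i) (cs ! (Suc i mod length cs))" "red {cs ! i, cs ! (Suc i mod length cs)}"
    by auto
qed

lemma has_red_cycle_of_path_and_link:
  assumes "distinct (ps @ qs)" "ps \<noteq> []" "qs \<noteq> []"
    and "successively (\<lambda>u v. E u v \<and> red {u, v}) ps"
    and "successively (\<lambda>u v. E u v \<and> red {u, v}) (last ps # qs @ [hd ps])"
  shows "has_red_cycle E red (length ps + length qs)"
proof -
  have "successively (\<lambda>u v. E u v \<and> red {u, v}) ([last ps] @ qs @ [hd ps])" using assms(5) by simp
  then have "successively (\<lambda>u v. E u v \<and> red {u, v}) (ps @ qs)"
    "E (last (ps @ qs)) (hd (ps @ qs))" "red {last (ps @ qs), hd (ps @ qs)}"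
    using assms(2-4) unfolding successively_append_iff by auto
  then show ?thesis using has_red_cycle_of_list[of "ps @ qs"] assms(1,2) by simp
qed

lemma distinct_successively_join:
  assumes "distinct xs" "distinct ys" "set xs \<inter> set (tl ys) = {}"
    and "successively R xs" "successively R ys"
    and "xs \<noteq> []" "ys \<noteq> []" "last xs = hd ys"
  shows "distinct (xs @ tl ys)" "successively R (xs @ tl ys)" "last (xs @ tl ys) = last ys"
proof -
  obtain y ys' where ys: "ys = y # ys'" using assms(7) by (cases ys) auto
  show "distinct (xs @ tl ys)" "successively R (xs @ tl ys)"
    using assms ys by (auto simp: successively_append_iff successively_Cons)
  show "last (xs @ tl ys) = last ys" using assms(6,8) ys by auto
qed

lemma successively_take_drop:
  assumes "successively R xs"
  shows "successively R (take k (drop i xs))"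
  using assms by (metis append_take_drop_id successively_append_iff)

lemma successively_alternates:
  assumes "successively R xs" "\<And>u v. R u v \<Longrightarrow> f u \<noteq> f v" "i + q < length xs"
  shows "f (xs ! (i + q)) = (f (xs ! i) = even q)"
  using assms(3)
proof (induction q)
  case (Suc q)
  have "R (xs ! (i + q)) (xs ! Suc (i + q))" using successively_nth[OF assms(1)] Suc.prems by simp
  then show ?case using Suc assms(2) by fastforce
qed simp

lemma distinct_index_pair_avoiding:
  assumes "distinct P" "finite B" "2 * card B + q < length P"
  shows "\<exists>i. i + q < length P \<and> P ! i \<notin> B \<and> P ! (i + q) \<notin> B"
proof -
  define I where "I = {..<length P - q}"
  define B1 where "B1 = {j\<in>I. P ! j \<in> B}"
  define B2 where "B2 = {j\<in>I. P ! (j + q) \<in> B}"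
  have "card B1 \<le> card B"
    by (rule card_inj_on_le[of "(!) P"])
      (use assms(1,2) in \<open>auto simp: B1_def I_def inj_on_def nth_eq_iff_index_eq\<close>)
  moreover have "card B2 \<le> card B"
    by (rule card_inj_on_le[of "\<lambda>j. P ! (j + q)"])
      (use assms(1,2) in \<open>auto simp: B2_def I_def inj_on_def nth_eq_iff_index_eq\<close>)
  ultimately have "card (B1 \<union> B2) < card I"
    using card_Un_le[of B1 B2] assms(3) unfolding I_def by simp
  then have "\<not> I \<subseteq> B1 \<union> B2"
    using card_mono[of "B1 \<union> B2" I] unfolding I_def B1_def B2_def by fastforce
  then obtain j where "j < length P - q" "P ! j \<notin> B" "P ! (j + q) \<notin> B"
    unfolding I_def B1_def B2_def by auto
  moreover have "j + q < length P" using \<open>j < length P - q\<close> by linarith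
  ultimately show ?thesis by blast
qed

section \<open>Depth-first search and expansion\<close>

text \<open>A state of depth-first search: \<open>S\<close> holds the finished vertices, \<open>P\<close> is the stack and \<open>T\<close> holds
  the unvisited ones; a finished vertex has no neighbour that is still unvisited.\<close>

definition dfs_state :: "('a \<Rightarrow> 'a \<Rightarrow> bool) \<Rightarrow> 'a set \<Rightarrow> 'a set \<Rightarrow> 'a list \<Rightarrow> 'a set \<Rightarrow> bool" where
  "dfs_state adj V S P T \<longleftrightarrow>
     S \<union> set P \<union> T = V \<and> S \<inter> set P = {} \<and> S \<inter> T = {} \<and> set P \<inter> T = {} \<and>
     distinct P \<and> successively adj P \<and> (\<forall>s\<in>S. \<forall>t\<in>T. \<not> adj s t)"

lemma dfs_state_step:
  assumes "finite V" "dfs_state adj V S P T" "T \<noteq> {}"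
  shows "\<exists>S' P' T'. dfs_state adj V S' P' T' \<and> card S' + card T = card S + card T' + 1"
proof -
  have fin: "finite S" "finite T"
    using assms(1,2) unfolding dfs_state_def by (metis finite_Un)+
  consider (empty) "P = []" | (push) t where "P \<noteq> []" "t \<in> T" "adj (last P) t"
    | (pop) "P \<noteq> []" "\<forall>t\<in>T. \<not> adj (last P) t"
    by blast
  then show ?thesis
  proof cases
    case empty
    obtain t where t: "t \<in> T" using assms(3) by blast
    have "dfs_state adj V S [t] (T - {t})"
      using assms(2) empty t unfolding dfs_state_def by auto
    then show ?thesis using card.remove[OF fin(2) t] by fastforce
  next
    case (push t)
    have "dfs_state adj V S (P @ [t]) (T - {t})"
      using assms(2) push unfolding dfs_state_def by (auto simp: successively_append_iff)
    then show ?thesis using card.remove[OF fin(2) push(2)] by fastforce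
  next
    case pop
    then obtain Q x where P: "P = Q @ [x]" by (metis rev_exhaust)
    have "dfs_state adj V (insert x S) Q T"
      using assms(2) pop unfolding dfs_state_def P by (auto simp: successively_append_iff)
    moreover have "x \<notin> S" using assms(2) unfolding dfs_state_def P by auto
    ultimately show ?thesis using fin by fastforce
  qed
qed

lemma dfs_balanced_state:
  assumes "finite V"
  shows "\<exists>S P T. dfs_state adj V S P T \<and> card S = card T"
proof -
  have "\<exists>S P T. dfs_state adj V S P T \<and> card S = card T"
    if "dfs_state adj V S P T" "card T = card S + k" for k S P T
    using that
  proof (induction k arbitrary: S P T)
    case (Suc k)
    have "T \<noteq> {}" using Suc.prems(2) by auto
    then obtain S' P' T' where "dfs_state adj V S' P' T'" "card S' + card T = card S + card T' + 1"
      using dfs_state_step[OF assms Suc.prems(1)] by blast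
    then show ?case using Suc.prems(2) by (intro Suc.IH) auto
  qed (metis add_0_right)
  moreover have "dfs_state adj V {} [] V" unfolding dfs_state_def by auto
  ultimately show ?thesis by auto
qed

text \<open>Take \<open>D\<close> maximal among sets of size \<open>< k\<close> with at most \<open>c * card D\<close> outside neighbours. A
  small set \<open>S\<close> outside \<open>D\<close> with fewer than \<open>c * card S\<close> new neighbours could be added to \<open>D\<close>,
  contradicting either the maximality of \<open>D\<close> or the hypothesis on sets of size between \<open>k\<close> and \<open>2k\<close>.\<close>

lemma remove_small_set_to_expand:
  fixes adj :: "'a \<Rightarrow> 'a \<Rightarrow> bool" and c k :: nat
  assumes "finite V" "k > 0"
    and expands: "\<And>D. D \<subseteq> V \<Longrightarrow> k \<le> card D \<Longrightarrow> card D < 2 * k \<Longrightarrow>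
                   c * card D < card ({v\<in>V. \<exists>s\<in>D. adj s v} - D)"
  shows "\<exists>D \<subseteq> V. card D < k \<and>
           (\<forall>S \<subseteq> V - D. card S < k \<longrightarrow> c * card S \<le> card {v\<in>V - D. \<exists>s\<in>S. adj s v})"
proof -
  define N where "N S = {v\<in>V. \<exists>s\<in>S. adj s v}" for S
  define small_sparse where
    "small_sparse D \<longleftrightarrow> D \<subseteq> V \<and> card D < k \<and> card (N D - D) \<le> c * card D" for D
  have "small_sparse {}" unfolding small_sparse_def N_def using assms(2) by simp
  then obtain D where D: "small_sparse D" and D_max: "\<And>D'. small_sparse D' \<Longrightarrow> card D' \<le> card D"
    using ex_has_greatest_nat[of small_sparse "{}" card k] unfolding small_sparse_def by metis
  have DV: "D \<subseteq> V" "card D < k" "finite D"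
    using D assms(1) finite_subset unfolding small_sparse_def by auto
  have "c * card S \<le> card (N S - D)" if S: "S \<subseteq> V - D" "card S < k" for S
  proof (rule ccontr)
    assume sparse: "\<not> c * card S \<le> card (N S - D)"
    have finS: "finite S" using S assms(1) finite_subset by blast
    have card_DS: "card (D \<union> S) = card D + card S" using S DV finS by (subst card_Un_disjoint) auto
    have "N (D \<union> S) - (D \<union> S) \<subseteq> (N D - D) \<union> (N S - D)" unfolding N_def by auto
    then have "card (N (D \<union> S) - (D \<union> S)) \<le> card ((N D - D) \<union> (N S - D))"
      by (rule card_mono[rotated]) (simp add: N_def assms(1))
    also have "\<dots> \<le> card (N D - D) + card (N S - D)" by (rule card_Un_le)
    also have "\<dots> < c * card (D \<union> S)"
      using D sparse card_DS unfolding small_sparse_def by (simp add: distrib_left)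
    finally have lt: "card (N (D \<union> S) - (D \<union> S)) < c * card (D \<union> S)" .
    show False
    proof (cases "card (D \<union> S) < k")
      case True
      then have "small_sparse (D \<union> S)" unfolding small_sparse_def using DV S lt by auto
      then show False using D_max card_DS sparse by fastforce
    next
      case False
      then show False using expands[of "D \<union> S"] lt card_DS DV S unfolding N_def by auto
    qed
  qed
  moreover have "N S - D = {v\<in>V - D. \<exists>s\<in>S. adj s v}" for S unfolding N_def by auto
  ultimately show ?thesis using DV by auto
qed

section \<open>Layered trees\<close>

definition layered_tree ::
  "('a \<Rightarrow> 'a \<Rightarrow> bool) \<Rightarrow> 'a set \<Rightarrow> 'a \<Rightarrow> nat \<Rightarrow> (nat \<Rightarrow> 'a set) \<Rightarrow> bool" where
  "layered_tree adj V r k L \<longleftrightarrow> L 0 = {r} \<and> disjoint_family_on L {1..k} \<and>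
     (\<forall>i\<in>{1..k}. L i \<subseteq> V \<and> card (L i) = 2 ^ i \<and> (\<forall>v\<in>L i. \<exists>u\<in>L (i - 1). adj u v))"

lemma layered_tree_SucD: "layered_tree adj V r (Suc k) L \<Longrightarrow> layered_tree adj V r k L"
  using disjoint_family_on_mono[of "{1..k}" "{1..Suc k}" L] unfolding layered_tree_def by auto

lemma layered_tree_UN_subset: "layered_tree adj V r k L \<Longrightarrow> (\<Union>i\<in>{1..k}. L i) \<subseteq> V"
  unfolding layered_tree_def by auto

lemma UN_layers_upd_Suc:
  "(\<Union>i\<in>{1..Suc k}. (L(Suc k := N)) i) = (\<Union>i\<in>{1..k}. L i) \<union> N"
  by (auto simp: le_Suc_eq)

lemma layered_tree_extend:
  assumes "layered_tree adj V r k L" "N \<subseteq> V" "card N = 2 ^ Suc k"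
    and "N \<inter> (\<Union>i\<in>{1..k}. L i) = {}" "\<forall>v\<in>N. \<exists>u\<in>L k. adj u v"
  shows "layered_tree adj V r (Suc k) (L(Suc k := N))"
proof -
  have "{1..Suc k} = insert (Suc k) {1..k}" by auto
  then have "disjoint_family_on (L(Suc k := N)) {1..Suc k}"
    using assms(1,4) unfolding layered_tree_def
    by (auto simp: disjoint_family_on_insert disjoint_family_on_def)
  then show ?thesis using assms unfolding layered_tree_def by (auto simp: le_Suc_eq)
qed

lemma card_layered_tree:
  assumes "layered_tree adj V r k L"
  shows "card (\<Union>i\<in>{1..k}. L i) + 2 = 2 ^ Suc k"
proof -
  have "finite (L i)" if "i \<in> {1..k}" for i
    using assms that card_ge_0_finite[of "L i"] unfolding layered_tree_def by auto
  then have "card (\<Union>i\<in>{1..k}. L i) = (\<Sum>i\<in>{1..k}. card (L i))"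
    using assms unfolding layered_tree_def by (intro card_UN_disjoint') auto
  also have "\<dots> = (\<Sum>i\<in>{1..k}. 2 ^ i)"
    using assms unfolding layered_tree_def by (intro sum.cong) auto
  finally have "card (\<Union>i\<in>{1..k}. L i) = (\<Sum>i\<in>{1..k}. 2 ^ i)" .
  moreover have "(\<Sum>i\<in>{1..k}. 2 ^ i) + 2 = (2::nat) ^ Suc k"
    by (induction k) auto
  ultimately show ?thesis by simp
qed

lemma card_two_layered_trees:
  assumes "layered_tree adj V r1 k L1" "layered_tree adj V r2 k L2"
  shows "card ((\<Union>i\<in>{1..k}. L1 i) \<union> (\<Union>i\<in>{1..k}. L2 i)) + 4 \<le> 2 ^ (k + 2)"
  using card_layered_tree[OF assms(1)] card_layered_tree[OF assms(2)]
    card_Un_le[of "\<Union>i\<in>{1..k}. L1 i" "\<Union>i\<in>{1..k}. L2 i"] by simp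

lemma layered_tree_path:
  assumes "layered_tree adj V r k L" "r \<notin> V" "v \<in> L k"
  shows "\<exists>ps. length ps = k \<and> last (r # ps) = v \<and> set ps \<subseteq> (\<Union>i\<in>{1..k}. L i) \<and>
           distinct (r # ps) \<and> successively adj (r # ps)"
  using assms(1,3)
proof (induction k arbitrary: v)
  case 0
  then show ?case unfolding layered_tree_def by auto
next
  case (Suc k)
  obtain u where u: "u \<in> L k" "adj u v"
    using Suc.prems unfolding layered_tree_def by fastforce
  obtain ps where ps: "length ps = k" "last (r # ps) = u" "set ps \<subseteq> (\<Union>i\<in>{1..k}. L i)"
    "distinct (r # ps)" "successively adj (r # ps)"
    using Suc.IH[OF layered_tree_SucD[OF Suc.prems(1)] u(1)] by blast
  have fam: "disjoint_family_on L {1..Suc k}" "L (Suc k) \<subseteq> V"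
    using Suc.prems(1) unfolding layered_tree_def by auto
  have "L (Suc k) \<inter> L i = {}" if "i \<in> {1..k}" for i
    using disjoint_family_onD[OF fam(1), of "Suc k" i] that by auto
  then have "v \<notin> set ps" using ps(3) Suc.prems(2) by blast
  moreover have "v \<noteq> r" using fam(2) Suc.prems(2) assms(2) by auto
  moreover have "successively adj ((r # ps) @ [v])"
    unfolding successively_append_iff using ps(2,5) u(2) by simp
  moreover have "set (ps @ [v]) \<subseteq> (\<Union>i\<in>{1..Suc k}. L i)"
    using ps(3) Suc.prems(2) by (force simp: le_Suc_eq)
  ultimately show ?case using ps
    by (intro exI[of _ "ps @ [v]"]) simp
qed

lemma layered_tree_side:
  assumes "layered_tree adj V r k L" "\<And>u v. adj u v \<Longrightarrow> f u \<noteq> f v" "v \<in> L k"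
  shows "f v = (f r = even k)"
  using assms(1,3)
proof (induction k arbitrary: v)
  case (Suc k)
  obtain u where "u \<in> L k" "adj u v"
    using Suc.prems unfolding layered_tree_def by fastforce
  then show ?case using Suc.IH[OF layered_tree_SucD[OF Suc.prems(1)]] assms(2) by fastforce
qed (simp add: layered_tree_def)

lemma card_neighbours_last_level:
  assumes "layered_tree adj V r k L" "4 \<le> card {v\<in>V. adj r v}"
    and expands: "\<And>S. S \<subseteq> V \<Longrightarrow> card S < 2 * m \<Longrightarrow> 8 * card S \<le> card {v\<in>V. \<exists>s\<in>S. adj s v}"
    and "2 ^ k < 2 * m"
  shows "8 * 2 ^ k \<le> card {v\<in>V. \<exists>s\<in>L k. adj s v} + 4"
proof (cases "k = 0")
  case False
  then have "L k \<subseteq> V" "card (L k) = 2 ^ k" using assms(1) unfolding layered_tree_def by auto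
  then show ?thesis using expands[of "L k"] assms(4) by simp
qed (use assms(1,2) in \<open>simp add: layered_tree_def\<close>)

text \<open>Each last level has at least \<open>2^(k+3) - 4\<close> neighbours, while the two trees occupy only
  \<open>2^(k+2) - 4\<close> vertices, leaving room for two new disjoint levels of size \<open>2^(k+1)\<close>.\<close>

lemma two_layered_trees:
  assumes "finite V"
    and expands: "\<And>S. S \<subseteq> V \<Longrightarrow> card S < 2 * m \<Longrightarrow> 8 * card S \<le> card {v\<in>V. \<exists>s\<in>S. adj s v}"
    and "4 \<le> card {v\<in>V. adj r1 v}" "4 \<le> card {v\<in>V. adj r2 v}" "2 ^ k \<le> 2 * m"
  shows "\<exists>L1 L2. layered_tree adj V r1 k L1 \<and> layered_tree adj V r2 k L2 \<and>
           (\<Union>i\<in>{1..k}. L1 i) \<inter> (\<Union>i\<in>{1..k}. L2 i) = {}"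
  using assms(5)
proof (induction k)
  case 0
  show ?case unfolding layered_tree_def
    by (rule exI[of _ "\<lambda>_. {r1}"], rule exI[of _ "\<lambda>_. {r2}"]) (simp add: disjoint_family_on_def)
next
  case (Suc k)
  then obtain L1 L2 where L1: "layered_tree adj V r1 k L1" and L2: "layered_tree adj V r2 k L2"
    and disj: "(\<Union>i\<in>{1..k}. L1 i) \<inter> (\<Union>i\<in>{1..k}. L2 i) = {}"
    by fastforce
  define N where "N L = {v\<in>V. \<exists>s\<in>L k. adj s v}" for L :: "nat \<Rightarrow> 'a set"
  define U where "U = (\<Union>i\<in>{1..k}. L1 i) \<union> (\<Union>i\<in>{1..k}. L2 i)"
  have "2 ^ k \<le> m" "0 < (2::nat) ^ k" using Suc.prems by simp_all
  then have "2 ^ k < 2 * m" by linarith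
  have deg: "8 * 2 ^ k \<le> card (N L1) + 4" "8 * 2 ^ k \<le> card (N L2) + 4"
    using card_neighbours_last_level[OF L1 assms(3) expands] card_neighbours_last_level[OF L2 assms(4) expands]
      \<open>2 ^ k < 2 * m\<close> unfolding N_def by auto
  have "card U + 4 \<le> 2 ^ (k + 2)" unfolding U_def by (rule card_two_layered_trees[OF L1 L2])
  moreover have finU: "finite U"
    using L1 L2 assms(1) finite_subset unfolding U_def layered_tree_def by fastforce
  ultimately have "2 ^ Suc k \<le> card (N L1 - U)"
    using deg(1) diff_card_le_card_Diff[OF finU, of "N L1"] by simp
  then obtain N1 where N1: "N1 \<subseteq> N L1 - U" "card N1 = 2 ^ Suc k"
    by (meson obtain_subset_with_card_n)
  have "finite N1" using N1 assms(1) finite_subset unfolding N_def by fastforce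
  then have "2 ^ Suc k \<le> card (N L2 - (U \<union> N1))"
    using deg(2) diff_card_le_card_Diff[of "U \<union> N1" "N L2"] card_Un_le[of U N1]
      \<open>card U + 4 \<le> 2 ^ (k + 2)\<close> N1(2) finU by simp
  then obtain N2 where N2: "N2 \<subseteq> N L2 - (U \<union> N1)" "card N2 = 2 ^ Suc k"
    by (meson obtain_subset_with_card_n)
  have "layered_tree adj V r1 (Suc k) (L1(Suc k := N1))"
    using N1 by (intro layered_tree_extend[OF L1]) (auto simp: N_def U_def)
  moreover have "layered_tree adj V r2 (Suc k) (L2(Suc k := N2))"
    using N2 by (intro layered_tree_extend[OF L2]) (auto simp: N_def U_def)
  moreover have "((\<Union>i\<in>{1..k}. L1 i) \<union> N1) \<inter> ((\<Union>i\<in>{1..k}. L2 i) \<union> N2) = {}"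
    using disj N1 N2 unfolding U_def by blast
  ultimately have "layered_tree adj V r1 (Suc k) (L1(Suc k := N1)) \<and>
      layered_tree adj V r2 (Suc k) (L2(Suc k := N2)) \<and>
      (\<Union>i\<in>{1..Suc k}. (L1(Suc k := N1)) i) \<inter> (\<Union>i\<in>{1..Suc k}. (L2(Suc k := N2)) i) = {}"
    unfolding UN_layers_upd_Suc by blast
  then show ?case by blast
qed

lemma path_through_two_layered_trees:
  assumes sym: "\<And>x y. adj x y \<Longrightarrow> adj y x"
    and P: "distinct P" "successively adj P" "set P \<inter> V = {}" "i + q < length P"
    and L1: "layered_tree adj V (P ! i) a L1" and L2: "layered_tree adj V (P ! (i + q)) a L2"
    and disj: "(\<Union>j\<in>{1..a}. L1 j) \<inter> (\<Union>j\<in>{1..a}. L2 j) = {}"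
    and "u \<in> L1 a" "w \<in> L2 a"
  shows "\<exists>ps. distinct ps \<and> successively adj ps \<and> hd ps = u \<and> last ps = w \<and>
           length ps = 2 * a + q + 1 \<and> set ps \<subseteq> set P \<union> (\<Union>j\<in>{1..a}. L1 j \<union> L2 j)"
proof -
  define r1 where "r1 = P ! i"
  define r2 where "r2 = P ! (i + q)"
  have "r1 \<in> set P" "r2 \<in> set P" using P(4) unfolding r1_def r2_def by auto
  then have "r1 \<notin> V" "r2 \<notin> V" using P(3) by auto
  obtain ps1 where ps1: "length ps1 = a" "last (r1 # ps1) = u" "set ps1 \<subseteq> (\<Union>j\<in>{1..a}. L1 j)"
      "distinct (r1 # ps1)" "successively adj (r1 # ps1)"
    using layered_tree_path[OF L1[folded r1_def] \<open>r1 \<notin> V\<close> \<open>u \<in> L1 a\<close>] by blast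
  obtain ps2 where ps2: "length ps2 = a" "last (r2 # ps2) = w" "set ps2 \<subseteq> (\<Union>j\<in>{1..a}. L2 j)"
      "distinct (r2 # ps2)" "successively adj (r2 # ps2)"
    using layered_tree_path[OF L2[folded r2_def] \<open>r2 \<notin> V\<close> \<open>w \<in> L2 a\<close>] by blast
  define Q where "Q = take (Suc q) (drop i P)"
  have Q: "distinct Q" "successively adj Q" "length Q = Suc q" "set Q \<subseteq> set P"
    using P unfolding Q_def by (auto simp: successively_take_drop dest: in_set_takeD in_set_dropD)
  have "hd Q = r1" "last Q = r2" using P(4) Q(3) unfolding Q_def r1_def r2_def
    by (auto simp: hd_drop_conv_nth last_conv_nth)
  have UV: "(\<Union>j\<in>{1..a}. L1 j) \<subseteq> V" "(\<Union>j\<in>{1..a}. L2 j) \<subseteq> V"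
    using layered_tree_UN_subset[OF L1] layered_tree_UN_subset[OF L2] .
  have "r1 \<notin> set (tl Q)" "set (tl Q) \<subseteq> set P" using Q(1,3,4) \<open>hd Q = r1\<close> by (cases Q; auto)+
  then have "set (rev (r1 # ps1)) \<inter> set (tl Q) = {}"
    using ps1(3) UV(1) P(3) by auto
  moreover have "successively adj (rev (r1 # ps1))"
    unfolding successively_rev using ps1(5) by (rule successively_mono) (rule sym)
  moreover have "Q \<noteq> []" using Q(3) by auto
  ultimately have A: "distinct (rev (r1 # ps1) @ tl Q)" "successively adj (rev (r1 # ps1) @ tl Q)"
      "last (rev (r1 # ps1) @ tl Q) = r2"
    using distinct_successively_join[of "rev (r1 # ps1)" Q adj] ps1(4) Q(1,2) \<open>hd Q = r1\<close> \<open>last Q = r2\<close>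
    by auto
  have "set (rev (r1 # ps1) @ tl Q) \<inter> set (tl (r2 # ps2)) = {}"
  proof -
    have "set ps2 \<inter> set P = {}" "set ps1 \<inter> set ps2 = {}" using ps1(3) ps2(3) UV P(3) disj by blast+
    then show ?thesis using \<open>r1 \<in> set P\<close> \<open>set (tl Q) \<subseteq> set P\<close> by auto
  qed
  then have "distinct (rev (r1 # ps1) @ tl Q @ ps2)" "successively adj (rev (r1 # ps1) @ tl Q @ ps2)"
      "last (rev (r1 # ps1) @ tl Q @ ps2) = w"
    using distinct_successively_join[of "rev (r1 # ps1) @ tl Q" "r2 # ps2" adj] A ps2 by auto
  moreover have "hd (rev (r1 # ps1) @ tl Q @ ps2) = u"
    using ps1(2) by (metis hd_append2 hd_rev list.distinct(1) rev_is_Nil_conv)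
  moreover have "length (rev (r1 # ps1) @ tl Q @ ps2) = 2 * a + q + 1" using ps1(1) ps2(1) Q(3) by simp
  moreover have "set (rev (r1 # ps1) @ tl Q @ ps2) \<subseteq> set P \<union> (\<Union>j\<in>{1..a}. L1 j \<union> L2 j)"
    using ps1(3) ps2(3) \<open>r1 \<in> set P\<close> \<open>set (tl Q) \<subseteq> set P\<close> by auto
  ultimately show ?thesis by blast
qed

section \<open>Colourings without a blue biclique\<close>

lemma tripartite_edge_sym: "tripartite_edge X Y Z u v \<Longrightarrow> tripartite_edge X Y Z v u"
  unfolding tripartite_edge_def by auto

text \<open>The theorem is applied with \<open>m = min m1 m2\<close> and \<open>M = max m1 m2\<close>; the last assumption says
  that there is no blue \<open>K(m, M)\<close> between two parts.\<close>

locale red_biclique_free =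
  fixes X Y Z :: "'a set" and red :: "'a set \<Rightarrow> bool" and m M :: nat
  assumes finite_parts: "finite X" "finite Y" "finite Z"
    and disjoint_parts: "X \<inter> Y = {}" "X \<inter> Z = {}" "Y \<inter> Z = {}"
    and red_edge_between: "\<And>U W. finite U \<Longrightarrow> finite W \<Longrightarrow>
      \<forall>u\<in>U. \<forall>w\<in>W. tripartite_edge X Y Z u w \<Longrightarrow> m \<le> card U \<Longrightarrow> M \<le> card W \<Longrightarrow>
      \<exists>u\<in>U. \<exists>w\<in>W. red {u, w}"
begin

abbreviation edge :: "'a \<Rightarrow> 'a \<Rightarrow> bool" where
  "edge \<equiv> tripartite_edge X Y Z"

definition red_xy :: "'a \<Rightarrow> 'a \<Rightarrow> bool" where
  "red_xy u v \<longleftrightarrow> (u \<in> X \<and> v \<in> Y \<or> u \<in> Y \<and> v \<in> X) \<and> red {u, v}"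

definition across :: "'a set \<Rightarrow> 'a set \<Rightarrow> bool" where
  "across A B \<longleftrightarrow> A \<subseteq> X \<and> B \<subseteq> Y \<or> A \<subseteq> Y \<and> B \<subseteq> X"

lemma red_xy_sym: "red_xy u v \<Longrightarrow> red_xy v u"
  unfolding red_xy_def by (auto simp: insert_commute)

lemma red_xy_red_edge: "red_xy u v \<Longrightarrow> edge u v \<and> red {u, v}"
  unfolding red_xy_def tripartite_edge_def by auto

lemma red_xy_changes_side: "red_xy u v \<Longrightarrow> (u \<in> X) \<noteq> (v \<in> X)"
  using disjoint_parts unfolding red_xy_def by auto

lemma across_edge: "across A B \<Longrightarrow> u \<in> A \<Longrightarrow> w \<in> B \<Longrightarrow> edge u w"
  unfolding across_def tripartite_edge_def by auto

lemma red_edge_between_swapped: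
  assumes "finite U" "finite W" "\<forall>u\<in>U. \<forall>w\<in>W. edge u w" "M \<le> card U" "m \<le> card W"
  shows "\<exists>u\<in>U. \<exists>w\<in>W. red {u, w}"
  using red_edge_between[OF assms(2,1) _ assms(5,4)] assms(3)
  by (metis tripartite_edge_sym insert_commute)

lemma card_red_neighbours:
  assumes "across A B" "finite A" "finite B" "m \<le> card A"
  shows "card B < card {w\<in>B. \<exists>u\<in>A. red_xy u w} + M"
proof -
  define W where "W = {w\<in>B. \<forall>u\<in>A. \<not> red {u, w}}"
  have "card W < M"
  proof (rule ccontr)
    assume "\<not> card W < M"
    then have "M \<le> card W" by simp
    moreover have "finite W" "\<forall>u\<in>A. \<forall>w\<in>W. edge u w"
      using assms(1,3) across_edge unfolding W_def by auto
    ultimately obtain u w where "u \<in> A" "w \<in> W" "red {u, w}"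
      using red_edge_between[OF assms(2) _ _ assms(4)] by blast
    then show False unfolding W_def by blast
  qed
  moreover have "B \<subseteq> {w\<in>B. \<exists>u\<in>A. red_xy u w} \<union> W"
    using assms(1) unfolding W_def red_xy_def across_def by auto
  then have "card B \<le> card ({w\<in>B. \<exists>u\<in>A. red_xy u w} \<union> W)"
    using assms(3) by (intro card_mono) (auto simp: W_def)
  then have "card B \<le> card {w\<in>B. \<exists>u\<in>A. red_xy u w} + card W"
    using card_Un_le le_trans by blast
  ultimately show ?thesis by linarith
qed

lemma card_red_neighbours_outside:
  assumes "across A B" "finite A" "finite B" "finite F" "m \<le> card A" "2 * M + card F \<le> card B"
  shows "M \<le> card ({w\<in>B. \<exists>u\<in>A. red_xy u w} - F)"
  using card_red_neighbours[OF assms(1-3,5)] diff_card_le_card_Diff[OF assms(4), of "{w\<in>B. \<exists>u\<in>A. red_xy u w}"]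
    assms(6) by linarith

lemma few_low_red_degree:
  assumes "across A B" "finite A" "finite B" "M + 3 * m \<le> card B"
  shows "card {r\<in>A. card {v\<in>B. red_xy r v} \<le> 3} < m"
proof (rule ccontr)
  assume "\<not> ?thesis"
  then obtain A' where A': "A' \<subseteq> {r\<in>A. card {v\<in>B. red_xy r v} \<le> 3}" "card A' = m"
    by (meson not_less obtain_subset_with_card_n)
  have "finite A'" using A'(1) assms(2) by (auto intro: finite_subset)
  have "card {w\<in>B. \<exists>u\<in>A'. red_xy u w} \<le> card (\<Union>u\<in>A'. {v\<in>B. red_xy u v})"
    by (rule card_mono) (use assms(3) \<open>finite A'\<close> in auto)
  also have "\<dots> \<le> (\<Sum>u\<in>A'. card {v\<in>B. red_xy u v})" by (rule card_UN_le[OF \<open>finite A'\<close>])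
  also have "\<dots> \<le> m * 3" using sum_bounded_above[of A' "\<lambda>u. card {v\<in>B. red_xy u v}" 3] A' by auto
  finally have "card {w\<in>B. \<exists>u\<in>A'. red_xy u w} \<le> m * 3" .
  moreover have "across A' B" using assms(1) A'(1) unfolding across_def by blast
  ultimately show False
    using card_red_neighbours[OF _ \<open>finite A'\<close> assms(3)] A'(2) assms(4) by fastforce
qed

lemma common_red_neighbour_in_Z:
  assumes "U \<subseteq> X \<union> Y" "W \<subseteq> X \<union> Y" "finite U" "finite W" "m \<le> card U" "M \<le> card W"
    and "m + M - 1 \<le> card Z"
  shows "\<exists>z\<in>Z. \<exists>u\<in>U. \<exists>w\<in>W. red {u, z} \<and> red {w, z}"
proof -
  define Zu where "Zu = {z\<in>Z. \<forall>u\<in>U. \<not> red {u, z}}"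
  define Zw where "Zw = {z\<in>Z. \<forall>w\<in>W. \<not> red {w, z}}"
  have fin: "finite Zu" "finite Zw" using finite_parts(3) unfolding Zu_def Zw_def by auto
  have edges: "\<forall>u\<in>A. \<forall>z\<in>Zs. edge u z" if "A \<subseteq> X \<union> Y" "Zs \<subseteq> Z" for A Zs
    using that unfolding tripartite_edge_def by auto
  have "card Zu < M"
    using red_edge_between[OF assms(3) fin(1) edges[OF assms(1)] assms(5)] unfolding Zu_def by force
  moreover have "card Zw < m"
    using red_edge_between_swapped[OF assms(4) fin(2) edges[OF assms(2)] assms(6)] unfolding Zw_def by force
  ultimately have "card (Zu \<union> Zw) < card Z" using card_Un_le[of Zu Zw] assms(7) by linarith
  moreover have "finite (Zu \<union> Zw)" using fin by simp
  ultimately have "\<not> Z \<subseteq> Zu \<union> Zw" by (meson card_mono leD)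
  then show ?thesis unfolding Zu_def Zw_def by blast
qed

lemma small_side_of_red_free_pair:
  assumes "finite S" "finite T" "\<forall>s\<in>S. \<forall>t\<in>T. \<not> red_xy s t" "across A B" "m \<le> M"
  shows "card (S \<inter> A) < M \<or> card (T \<inter> B) < M"
proof (rule ccontr)
  assume "\<not> ?thesis"
  then have "m \<le> card (S \<inter> A)" "M \<le> card (T \<inter> B)" using assms(5) by auto
  moreover have "finite (S \<inter> A)" "finite (T \<inter> B)" using assms(1,2) by auto
  moreover have "\<forall>u\<in>S \<inter> A. \<forall>w\<in>T \<inter> B. edge u w" using across_edge[OF assms(4)] by blast
  ultimately obtain u w where "u \<in> S \<inter> A" "w \<in> T \<inter> B" "red {u, w}"
    using red_edge_between by meson
  then show False using assms(3,4) unfolding red_xy_def across_def by blast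
qed

lemma long_red_path:
  assumes "X1 \<subseteq> X" "Y1 \<subseteq> Y" "card X1 = 3 * M + 4 * m" "card Y1 = 3 * M + 4 * m" "m \<le> M"
  shows "\<exists>P. set P \<subseteq> X1 \<union> Y1 \<and> distinct P \<and> successively red_xy P \<and> M + 4 * m + 2 \<le> length P"
proof -
  have fin: "finite X1" "finite Y1" using assms(1,2) finite_parts finite_subset by auto
  obtain S P T where dfs: "dfs_state red_xy (X1 \<union> Y1) S P T" and "card S = card T"
    using dfs_balanced_state fin by blast
  then have ST: "S \<union> set P \<union> T = X1 \<union> Y1" "S \<inter> set P = {}" "S \<inter> T = {}" "set P \<inter> T = {}"
    "distinct P" "successively red_xy P" "\<forall>s\<in>S. \<forall>t\<in>T. \<not> red_xy s t"
    unfolding dfs_state_def by blast+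
  have finST: "finite S" "finite T" using ST(1) fin by (metis finite_Un)+
  have few: "card (S \<inter> X1) < M \<or> card (T \<inter> Y1) < M" "card (S \<inter> Y1) < M \<or> card (T \<inter> X1) < M"
    using small_side_of_red_free_pair[OF finST ST(7) _ assms(5)] assms(1,2) unfolding across_def by auto
  have part: "card (S \<inter> A) + card (set P \<inter> A) + card (T \<inter> A) = card A"
    if "A \<subseteq> X1 \<union> Y1" "finite A" for A
  proof -
    have "A = (A \<inter> S) \<union> (A \<inter> set P) \<union> (A \<inter> T)" using that ST(1) by auto
    then show ?thesis using ST(2-4) that(2) by (metis card_Un_disjoint finite_Int Int_Un_distrib
          Int_assoc Int_commute Int_empty_right inf_left_commute finite_Un)
  qed
  have by_part: "card (S \<inter> X1) + card (set P \<inter> X1) + card (T \<inter> X1) = card X1"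
    "card (S \<inter> Y1) + card (set P \<inter> Y1) + card (T \<inter> Y1) = card Y1" using part fin by auto
  have split: "card (C \<inter> X1) + card (C \<inter> Y1) = card C" if "C \<subseteq> X1 \<union> Y1" "finite C" for C
  proof -
    have "X1 \<inter> Y1 = {}" using assms(1,2) disjoint_parts by auto
    then have "card ((C \<inter> X1) \<union> (C \<inter> Y1)) = card (C \<inter> X1) + card (C \<inter> Y1)"
      using that(2) by (subst card_Un_disjoint) auto
    moreover have "(C \<inter> X1) \<union> (C \<inter> Y1) = C" using that(1) by auto
    ultimately show ?thesis by simp
  qed
  have by_side: "card (S \<inter> X1) + card (S \<inter> Y1) = card S" "card (T \<inter> X1) + card (T \<inter> Y1) = card T"
    "card (set P \<inter> X1) + card (set P \<inter> Y1) = length P"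
    using split[of S] split[of T] split[of "set P"] ST(1) finST distinct_card[OF ST(5)] by auto
  have "M + 4 * m + 2 \<le> length P"
    using few by_part by_side \<open>card S = card T\<close> assms(3,4) by (elim disjE) linarith+
  then show ?thesis using ST(1,5,6) by blast
qed

lemma red_neighbours_of_medium_set:
  assumes "X2 \<subseteq> X" "Y2 \<subseteq> Y" "29 * M + 45 * m \<le> card X2" "29 * M + 45 * m \<le> card Y2"
    and D: "D \<subseteq> X2 \<union> Y2" "2 * m \<le> card D" "card D < 4 * m"
  shows "8 * card D < card ({v\<in>X2 \<union> Y2. \<exists>s\<in>D. red_xy s v} - D)"
proof -
  have "finite X2" "finite Y2" using assms(1,2) finite_parts finite_subset by auto
  then have fin: "finite X2" "finite Y2" "finite D" using D(1) finite_subset by auto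
  have "card D \<le> card (D \<inter> X2) + card (D \<inter> Y2)"
    using card_Un_le[of "D \<inter> X2" "D \<inter> Y2"] D(1) by (metis Int_Un_distrib Int_absorb2)
  then have "m \<le> card (D \<inter> X2) \<or> m \<le> card (D \<inter> Y2)" using D(2) by linarith
  then obtain A B where AB: "A = D \<inter> X2 \<and> B = Y2 \<or> A = D \<inter> Y2 \<and> B = X2" "m \<le> card A"
    by blast
  then have "across A B" "finite A" "finite B" "A \<subseteq> D" "29 * M + 45 * m \<le> card B"
    using assms(1-4) fin unfolding across_def by auto
  then have "card B < card {w\<in>B. \<exists>u\<in>A. red_xy u w} + M"
    using card_red_neighbours AB(2) by blast
  moreover have "{w\<in>B. \<exists>u\<in>A. red_xy u w} \<subseteq> ({v\<in>X2 \<union> Y2. \<exists>s\<in>D. red_xy s v} - D) \<union> D"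
    using AB(1) \<open>A \<subseteq> D\<close> by blast
  then have "card {w\<in>B. \<exists>u\<in>A. red_xy u w} \<le> card (({v\<in>X2 \<union> Y2. \<exists>s\<in>D. red_xy s v} - D) \<union> D)"
    using fin by (intro card_mono) auto
  then have "card {w\<in>B. \<exists>u\<in>A. red_xy u w} \<le> card ({v\<in>X2 \<union> Y2. \<exists>s\<in>D. red_xy s v} - D) + card D"
    using card_Un_le le_trans by blast
  ultimately show ?thesis using \<open>29 * M + 45 * m \<le> card B\<close> D(3) by linarith
qed

lemma red_expander:
  assumes "X2 \<subseteq> X" "Y2 \<subseteq> Y" "29 * M + 45 * m \<le> card X2" "29 * M + 45 * m \<le> card Y2" "0 < m"
  shows "\<exists>V \<subseteq> X2 \<union> Y2. 2 * M + 8 * m \<le> card (V \<inter> X) \<and> 2 * M + 8 * m \<le> card (V \<inter> Y) \<and>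
           (\<forall>S \<subseteq> V. card S < 2 * m \<longrightarrow> 8 * card S \<le> card {v\<in>V. \<exists>s\<in>S. red_xy s v})"
proof -
  have fin: "finite X2" "finite Y2" using assms(1,2) finite_parts finite_subset by auto
  obtain D where D: "D \<subseteq> X2 \<union> Y2" "card D < 2 * m"
    and expands: "\<forall>S \<subseteq> X2 \<union> Y2 - D. card S < 2 * m \<longrightarrow>
                    8 * card S \<le> card {v\<in>X2 \<union> Y2 - D. \<exists>s\<in>S. red_xy s v}"
    using remove_small_set_to_expand[of "X2 \<union> Y2" "2 * m" 8 red_xy]
      red_neighbours_of_medium_set[OF assms(1-4)] fin assms(5) by auto
  have "(X2 \<union> Y2 - D) \<inter> X = X2 - D" "(X2 \<union> Y2 - D) \<inter> Y = Y2 - D"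
    using assms(1,2) disjoint_parts by auto
  moreover have "card X2 - card D \<le> card (X2 - D)" "card Y2 - card D \<le> card (Y2 - D)"
    using D(1) fin by (meson diff_card_le_card_Diff finite_subset finite_Un)+
  ultimately show ?thesis using D(2) assms(3,4) expands by (intro exI[of _ "X2 \<union> Y2 - D"]) auto
qed

lemma few_low_red_degree_vertices:
  assumes "A \<subseteq> X \<union> Y" "finite A" "finite V" "M + 3 * m \<le> card (V \<inter> X)" "M + 3 * m \<le> card (V \<inter> Y)"
  shows "card {r\<in>A. card {v\<in>V. red_xy r v} \<le> 3} < 2 * m"
proof -
  define BX where "BX = {r\<in>A \<inter> X. card {v\<in>V \<inter> Y. red_xy r v} \<le> 3}"
  define BY where "BY = {r\<in>A \<inter> Y. card {v\<in>V \<inter> X. red_xy r v} \<le> 3}"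
  have "card BX < m" "card BY < m" unfolding BX_def BY_def
    using few_low_red_degree[of "A \<inter> X" "V \<inter> Y"] few_low_red_degree[of "A \<inter> Y" "V \<inter> X"]
      assms(2-5) unfolding across_def by auto
  have eqX: "{v\<in>V. red_xy r v} = {v\<in>V \<inter> Y. red_xy r v}" if "r \<in> X" for r
    using that disjoint_parts unfolding red_xy_def by auto
  have eqY: "{v\<in>V. red_xy r v} = {v\<in>V \<inter> X. red_xy r v}" if "r \<in> Y" for r
    using that disjoint_parts unfolding red_xy_def by auto
  have "{r\<in>A. card {v\<in>V. red_xy r v} \<le> 3} \<subseteq> BX \<union> BY"
  proof
    fix r assume r: "r \<in> {r\<in>A. card {v\<in>V. red_xy r v} \<le> 3}"
    then have "r \<in> X \<or> r \<in> Y" using assms(1) by auto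
    then show "r \<in> BX \<union> BY" using r eqX eqY unfolding BX_def BY_def by auto
  qed
  moreover have "BX \<union> BY \<subseteq> A" unfolding BX_def BY_def by blast
  then have "finite (BX \<union> BY)" using assms(2) finite_subset by blast
  ultimately have "card {r\<in>A. card {v\<in>V. red_xy r v} \<le> 3} \<le> card (BX \<union> BY)"
    by (rule card_mono[rotated])
  then have "card {r\<in>A. card {v\<in>V. red_xy r v} \<le> 3} \<le> card BX + card BY"
    using card_Un_le le_trans by blast
  then show ?thesis using \<open>card BX < m\<close> \<open>card BY < m\<close> by linarith
qed

lemma layered_tree_level_side:
  assumes "layered_tree red_xy V r k L" "V \<subseteq> X \<union> Y" "1 \<le> k"
  shows "L k \<subseteq> X \<longleftrightarrow> (r \<in> X \<longleftrightarrow> even k)" "L k \<subseteq> X \<or> L k \<subseteq> Y"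
proof -
  have "L k \<subseteq> V" "card (L k) = 2 ^ k" using assms(1,3) unfolding layered_tree_def by auto
  then have "L k \<subseteq> V" "L k \<noteq> {}" by auto
  moreover have "v \<in> X \<longleftrightarrow> (r \<in> X \<longleftrightarrow> even k)" if "v \<in> L k" for v
    using layered_tree_side[OF assms(1) red_xy_changes_side that] .
  ultimately show "L k \<subseteq> X \<longleftrightarrow> (r \<in> X \<longleftrightarrow> even k)" "L k \<subseteq> X \<or> L k \<subseteq> Y"
    using assms(2) by blast+
qed

lemma fresh_red_neighbours:
  assumes V: "finite V" "V \<subseteq> X \<union> Y" "2 * M + 8 * m \<le> card (V \<inter> X)" "2 * M + 8 * m \<le> card (V \<inter> Y)"
    and F: "finite F" "card F \<le> 8 * m"
    and L: "L \<subseteq> X \<or> L \<subseteq> Y" "finite L" "m \<le> card L"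
  shows "\<exists>W \<subseteq> V - F. finite W \<and> M \<le> card W \<and> across L W \<and> (\<forall>w\<in>W. \<exists>w'\<in>L. red_xy w' w)"
proof -
  define B where "B = (if L \<subseteq> X then V \<inter> Y else V \<inter> X)"
  have "across L B" "finite B" "2 * M + card F \<le> card B"
    using L(1) V F(2) unfolding B_def across_def by auto
  define W where "W = {w\<in>B. \<exists>u\<in>L. red_xy u w} - F"
  have "M \<le> card W"
    unfolding W_def using card_red_neighbours_outside[OF _ L(2) _ F(1) L(3)] \<open>across L B\<close> \<open>finite B\<close>
      \<open>2 * M + card F \<le> card B\<close> by blast
  moreover have "W \<subseteq> V - F" "finite W" "across L W" "\<forall>w\<in>W. \<exists>w'\<in>L. red_xy w' w"
    using \<open>across L B\<close> \<open>finite B\<close> unfolding W_def B_def across_def by auto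
  ultimately show ?thesis by blast
qed

lemma red_link:
  assumes V: "finite V" "V \<subseteq> X \<union> Y" "2 * M + 8 * m \<le> card (V \<inter> X)" "2 * M + 8 * m \<le> card (V \<inter> Y)"
    and "m + M - 1 \<le> card Z" "finite F" "card F \<le> 8 * m" "0 < m"
    and U: "U \<subseteq> X \<or> U \<subseteq> Y" "finite U" "m \<le> card U"
    and L: "L \<subseteq> X \<or> L \<subseteq> Y" "finite L" "m \<le> card L"
    and k: "k = 0 \<and> (U \<subseteq> X \<longleftrightarrow> L \<subseteq> X) \<or> k = 1"
  shows "\<exists>u\<in>U. \<exists>w'\<in>L. \<exists>w\<in>V - F. \<exists>zs. length zs = k \<and> set zs \<subseteq> Z \<and>
           successively (\<lambda>x y. edge x y \<and> red {x, y}) (w' # w # zs @ [u])"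
proof -
  obtain W where W: "W \<subseteq> V - F" "finite W" "M \<le> card W" "across L W" "\<forall>w\<in>W. \<exists>w'\<in>L. red_xy w' w"
    using fresh_red_neighbours[OF V assms(6,7) L] by blast
  define R where "R = (\<lambda>x y. edge x y \<and> red {x, y})"
  have "U \<subseteq> X \<union> Y" "W \<subseteq> X \<union> Y" using U(1) W(1) V(2) by auto
  from k have "\<exists>u\<in>U. \<exists>w\<in>W. \<exists>zs. length zs = k \<and> set zs \<subseteq> Z \<and> successively R (w # zs @ [u])"
  proof
    assume k0: "k = 0 \<and> (U \<subseteq> X \<longleftrightarrow> L \<subseteq> X)"
    have "L \<noteq> {}" using L(3) assms(8) by auto
    then have "across U W" using k0 U(1) W(4) disjoint_parts unfolding across_def by auto
    then obtain u w where "u \<in> U" "w \<in> W" "red {u, w}"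
      using red_edge_between[OF U(2) W(2) _ U(3) W(3)] across_edge by blast
    moreover have "edge w u"
      using tripartite_edge_sym[OF across_edge[OF \<open>across U W\<close> \<open>u \<in> U\<close> \<open>w \<in> W\<close>]] .
    ultimately have "successively R (w # [] @ [u])" unfolding R_def by (simp add: insert_commute)
    then show ?thesis using \<open>u \<in> U\<close> \<open>w \<in> W\<close> k0 by fastforce
  next
    assume "k = 1"
    obtain z u w where "z \<in> Z" "u \<in> U" "w \<in> W" "red {u, z}" "red {w, z}"
      using common_red_neighbour_in_Z[OF \<open>U \<subseteq> X \<union> Y\<close> \<open>W \<subseteq> X \<union> Y\<close> U(2) W(2) U(3) W(3) assms(5)] by blast
    moreover have "edge w z" "edge z u" using \<open>z \<in> Z\<close> \<open>u \<in> U\<close> \<open>w \<in> W\<close> \<open>U \<subseteq> X \<union> Y\<close> \<open>W \<subseteq> X \<union> Y\<close>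
      unfolding tripartite_edge_def by auto
    ultimately have "successively R (w # [z] @ [u])" unfolding R_def by (simp add: insert_commute)
    moreover have "length [z] = k" "set [z] \<subseteq> Z" using \<open>k = 1\<close> \<open>z \<in> Z\<close> by auto
    ultimately show ?thesis using \<open>u \<in> U\<close> \<open>w \<in> W\<close> by blast
  qed
  then obtain u w zs where "u \<in> U" "w \<in> W" "length zs = k" "set zs \<subseteq> Z" "successively R (w # zs @ [u])"
    by blast
  moreover obtain w' where "w' \<in> L" "red_xy w' w" using W(5) \<open>w \<in> W\<close> by blast
  ultimately have "successively R (w' # w # zs @ [u])" using red_xy_red_edge unfolding R_def by simp
  then show ?thesis using \<open>u \<in> U\<close> \<open>w \<in> W\<close> \<open>w' \<in> L\<close> \<open>length zs = k\<close> \<open>set zs \<subseteq> Z\<close> W(1)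
    unfolding R_def by blast
qed

text \<open>The cycle runs from a leaf \<open>u\<close> of the first tree down to its root, along \<open>P\<close> to the root of
  the second tree, up to a leaf \<open>w'\<close>, and back to \<open>u\<close> through a fresh vertex \<open>w\<close> (and a vertex
  of \<open>Z\<close> when \<open>n\<close> is odd).\<close>

lemma red_cycle_from_trees:
  assumes V: "finite V" "V \<subseteq> X \<union> Y" "2 * M + 8 * m \<le> card (V \<inter> X)" "2 * M + 8 * m \<le> card (V \<inter> Y)"
    and Z: "m + M - 1 \<le> card Z" and "0 < m"
    and P: "distinct P" "successively red_xy P" "set P \<subseteq> X \<union> Y" "set P \<inter> V = {}" "i + q < length P"
    and L1: "layered_tree red_xy V (P ! i) a L1" and L2: "layered_tree red_xy V (P ! (i + q)) a L2"
    and disj: "(\<Union>j\<in>{1..a}. L1 j) \<inter> (\<Union>j\<in>{1..a}. L2 j) = {}"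
    and a: "1 \<le> a" "m \<le> 2 ^ a" "2 ^ a \<le> 2 * m"
    and n: "q + 2 * a + 2 + (if even n then 0 else 1) = n"
  shows "has_red_cycle edge red n"
proof -
  define R where "R = (\<lambda>x y. edge x y \<and> red {x, y})"
  define Used where "Used = (\<Union>j\<in>{1..a}. L1 j) \<union> (\<Union>j\<in>{1..a}. L2 j)"
  have "Used \<subseteq> V" using layered_tree_UN_subset[OF L1] layered_tree_UN_subset[OF L2] Used_def by blast
  then have "finite Used" using V(1) finite_subset by blast
  have "card Used \<le> 8 * m" using card_two_layered_trees[OF L1 L2] a(3) unfolding Used_def by simp
  have layers: "L1 a \<subseteq> V" "m \<le> card (L1 a)" "L2 a \<subseteq> V" "m \<le> card (L2 a)"
    using a L1 L2 unfolding layered_tree_def by auto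
  then have fin: "finite (L1 a)" "finite (L2 a)" using V(1) finite_subset by auto
  have "(P ! (i + q) \<in> X) = ((P ! i \<in> X) = even q)"
    using successively_alternates[OF P(2) red_xy_changes_side P(5)] .
  define k where "k = (if even n then 0 else 1 :: nat)"
  have "k = 0 \<and> (L1 a \<subseteq> X \<longleftrightarrow> L2 a \<subseteq> X) \<or> k = 1"
    using layered_tree_level_side(1)[OF L1 V(2) a(1)] layered_tree_level_side(1)[OF L2 V(2) a(1)]
      \<open>(P ! (i + q) \<in> X) = _\<close> n unfolding k_def by auto
  then have "\<exists>u\<in>L1 a. \<exists>w'\<in>L2 a. \<exists>w\<in>V - Used. \<exists>zs. length zs = k \<and> set zs \<subseteq> Z \<and>
      successively R (w' # w # zs @ [u])"
    unfolding R_def by (rule red_link[OF V Z \<open>finite Used\<close> \<open>card Used \<le> 8 * m\<close> \<open>0 < m\<close>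
        layered_tree_level_side(2)[OF L1 V(2) a(1)] fin(1) layers(2)
        layered_tree_level_side(2)[OF L2 V(2) a(1)] fin(2) layers(4)])
  then obtain u w' w zs where "u \<in> L1 a" "w' \<in> L2 a" "w \<in> V - Used" "length zs = k" "set zs \<subseteq> Z"
    and link: "successively R (w' # w # zs @ [u])"
    by blast
  obtain ps where ps: "distinct ps" "successively red_xy ps" "hd ps = u" "last ps = w'"
      "length ps = 2 * a + q + 1" "set ps \<subseteq> set P \<union> Used"
    using path_through_two_layered_trees[OF red_xy_sym P(1,2,4,5) L1 L2 disj \<open>u \<in> L1 a\<close> \<open>w' \<in> L2 a\<close>]
    unfolding Used_def UN_Un_distrib by blast
  have "successively R ps" using ps(2) by (rule successively_mono) (simp add: R_def red_xy_red_edge)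
  have "set ps \<subseteq> X \<union> Y" "w \<notin> set ps" using ps(6) P(3,4) V(2) \<open>Used \<subseteq> V\<close> \<open>w \<in> V - Used\<close> by blast+
  moreover have "set zs \<inter> (X \<union> Y) = {}" using \<open>set zs \<subseteq> Z\<close> disjoint_parts by auto
  moreover have "distinct (w # zs)" using \<open>length zs = k\<close> \<open>set zs \<subseteq> Z\<close> \<open>w \<in> V - Used\<close> V(2) disjoint_parts
    unfolding k_def by (cases zs) (auto split: if_splits)
  ultimately have "distinct (ps @ w # zs)" using ps(1) by auto
  moreover have "length ps + length (w # zs) = n" using ps(5) \<open>length zs = k\<close> n unfolding k_def by auto
  moreover have "ps \<noteq> []" using ps(5) by auto
  ultimately show ?thesis
    using has_red_cycle_of_path_and_link[of ps "w # zs" edge red] \<open>successively R ps\<close> link ps(3,4,5)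
    unfolding R_def by auto
qed

theorem red_cycle:
  assumes "0 < m" "m \<le> M" "n \<le> M" "1 \<le> a" "m \<le> 2 ^ a" "2 ^ a \<le> 2 * m" "2 * a + 2 \<le> n"
    and "32 * M + 49 * m \<le> card X" "32 * M + 49 * m \<le> card Y" "m + M - 1 \<le> card Z"
  shows "has_red_cycle edge red n"
proof -
  have "3 * M + 4 * m \<le> card X" "3 * M + 4 * m \<le> card Y" using assms(8,9) by linarith+
  then obtain X1 Y1 where X1: "X1 \<subseteq> X" "card X1 = 3 * M + 4 * m" and Y1: "Y1 \<subseteq> Y" "card Y1 = 3 * M + 4 * m"
    by (meson obtain_subset_with_card_n)
  have "card (X - X1) = card X - card X1" "card (Y - Y1) = card Y - card Y1"
    using X1(1) Y1(1) finite_parts by (meson card_Diff_subset finite_subset)+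
  then have "29 * M + 45 * m \<le> card (X - X1)" "29 * M + 45 * m \<le> card (Y - Y1)"
    using X1(2) Y1(2) assms(8,9) by linarith+
  then obtain V where V: "V \<subseteq> (X - X1) \<union> (Y - Y1)" "2 * M + 8 * m \<le> card (V \<inter> X)" "2 * M + 8 * m \<le> card (V \<inter> Y)"
    and expands: "\<And>S. S \<subseteq> V \<Longrightarrow> card S < 2 * m \<Longrightarrow> 8 * card S \<le> card {v\<in>V. \<exists>s\<in>S. red_xy s v}"
    using red_expander[of "X - X1" "Y - Y1"] assms(1) by blast
  obtain P where P: "set P \<subseteq> X1 \<union> Y1" "distinct P" "successively red_xy P" "M + 4 * m + 2 \<le> length P"
    using long_red_path[OF X1(1) Y1(1) X1(2) Y1(2) assms(2)] by blast
  have "V \<subseteq> X \<union> Y" "set P \<subseteq> X \<union> Y" "set P \<inter> V = {}"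
    using V(1) P(1) X1(1) Y1(1) disjoint_parts by blast+
  then have "finite V" using finite_parts finite_subset by (meson finite_Un)
  define Bad where "Bad = {r\<in>set P. card {v\<in>V. red_xy r v} \<le> 3}"
  have "card Bad < 2 * m"
    unfolding Bad_def using few_low_red_degree_vertices \<open>finite V\<close> \<open>set P \<subseteq> X \<union> Y\<close> V(2,3) by simp
  define q where "q = n - 2 * a - 2 - (if even n then 0 else 1)"
  have "q \<le> n" unfolding q_def by simp
  then have "2 * card Bad + q < length P" using \<open>card Bad < 2 * m\<close> P(4) assms(3) by linarith
  moreover have "finite Bad" unfolding Bad_def by simp
  ultimately obtain i where i: "i + q < length P" "P ! i \<notin> Bad" "P ! (i + q) \<notin> Bad"
    using distinct_index_pair_avoiding[OF P(2)] by blast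
  have "P ! i \<in> set P" "P ! (i + q) \<in> set P" using i(1) by simp_all
  then have "4 \<le> card {v\<in>V. red_xy (P ! i) v}" "4 \<le> card {v\<in>V. red_xy (P ! (i + q)) v}"
    using i(2,3) unfolding Bad_def by simp_all
  then obtain L1 L2 where "layered_tree red_xy V (P ! i) a L1" "layered_tree red_xy V (P ! (i + q)) a L2"
      "(\<Union>j\<in>{1..a}. L1 j) \<inter> (\<Union>j\<in>{1..a}. L2 j) = {}"
    using two_layered_trees[OF \<open>finite V\<close> expands _ _ assms(6)] by blast
  moreover have "q + 2 * a + 2 + (if even n then 0 else 1) = n"
    using assms(7) unfolding q_def by (cases "even n") (simp, presburger)
  ultimately show ?thesis
    using red_cycle_from_trees[OF \<open>finite V\<close> \<open>V \<subseteq> X \<union> Y\<close> V(2,3) assms(10,1) P(2,3)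
        \<open>set P \<subseteq> X \<union> Y\<close> \<open>set P \<inter> V = {}\<close> i(1)] assms(4-6) by blast
qed

end

lemma power_ceiling_log2_bounds:
  fixes m :: nat assumes "m > 0"
  shows "m \<le> 2 ^ nat \<lceil>log 2 m\<rceil>" "2 ^ nat \<lceil>log 2 m\<rceil> < 2 * m"
proof -
  define k where "k = nat \<lceil>log 2 m\<rceil>"
  have k: "real k = \<lceil>log 2 m\<rceil>" unfolding k_def using assms by simp
  have "log 2 m \<le> real k" using k by linarith
  then have "real m \<le> 2 ^ k" using assms by (simp add: log_le_iff powr_realpow)
  then show "m \<le> 2 ^ nat \<lceil>log 2 m\<rceil>" unfolding k_def[symmetric]
    by (metis of_nat_le_iff of_nat_numeral of_nat_power)
  have "real k - 1 < log 2 m" using k ceiling_correct[of "log 2 m"] by linarith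
  then have "2 powr (real k - 1) < real m" using assms by (simp add: less_log_iff)
  then have "2 powr real k < 2 * real m" by (simp add: powr_diff)
  then have "real (2 ^ k) < real (2 * m)" by (simp add: powr_realpow)
  then show "2 ^ nat \<lceil>log 2 m\<rceil> < 2 * m" unfolding k_def[symmetric] by (simp only: of_nat_less_iff)
qed

lemma power_of_two_between_min:
  fixes m1 m2 n :: nat
  assumes "m1 > 0" "m2 > 0" "m2 \<ge> n"
    and n: "int n \<ge> \<lceil>log 2 (real m1)\<rceil> + \<lceil>log 2 (real m2)\<rceil> + 2"
  shows "\<exists>a\<ge>1. min m1 m2 \<le> 2 ^ a \<and> 2 ^ a \<le> 2 * min m1 m2 \<and> 2 * a + 2 \<le> n"
proof -
  define m where "m = min m1 m2"
  define k where "k = nat \<lceil>log 2 m\<rceil>"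
  have "m > 0" using assms unfolding m_def by simp
  have "\<lceil>log 2 (real m)\<rceil> \<le> \<lceil>log 2 (real m1)\<rceil>" "\<lceil>log 2 (real m)\<rceil> \<le> \<lceil>log 2 (real m2)\<rceil>"
    using \<open>m > 0\<close> unfolding m_def by (auto intro!: ceiling_mono)
  moreover have "0 \<le> log 2 (real m)" using \<open>m > 0\<close> by simp
  then have "0 \<le> \<lceil>log 2 (real m)\<rceil>" by (simp add: le_ceiling_iff)
  ultimately have "2 * k + 2 \<le> n" using n unfolding k_def by linarith
  show ?thesis
  proof (cases "k \<ge> 1")
    case True
    have "m \<le> 2 ^ k" "2 ^ k < 2 * m"
      using power_ceiling_log2_bounds[OF \<open>m > 0\<close>] unfolding k_def by auto
    then show ?thesis using True \<open>2 * k + 2 \<le> n\<close> unfolding m_def[symmetric]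
      by (intro exI[of _ k]) auto
  next
    case False
    then have "k = 0" by simp
    then have "m = 1" using power_ceiling_log2_bounds(1)[OF \<open>m > 0\<close>] \<open>m > 0\<close>
      unfolding k_def[symmetric] by simp
    txt \<open>Now the bound only gives \<open>2 \<le> n\<close>; feeding \<open>n \<le> m2\<close> back into it twice gives \<open>4 \<le> n\<close>.\<close>
    have "0 \<le> log 2 (real m1)" using assms(1) by simp
    then have m1: "0 \<le> \<lceil>log 2 (real m1)\<rceil>" by (simp add: le_ceiling_iff)
    have "2 \<le> n" using \<open>2 * k + 2 \<le> n\<close> by simp
    then have "1 \<le> \<lceil>log 2 (real m2)\<rceil>" using assms(3) by (simp add: le_ceiling_iff le_log_iff)
    then have "3 \<le> n" using n m1 by linarith
    then have "2 \<le> \<lceil>log 2 (real m2)\<rceil>" using assms(3) by (simp add: le_ceiling_iff less_log_iff)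
    then have "4 \<le> n" using n m1 by linarith
    then show ?thesis using \<open>m = 1\<close> unfolding m_def[symmetric] by (intro exI[of _ 1]) auto
  qed
qed

lemma has_blue_KabI:
  assumes "finite A" "finite B" "A \<inter> B = {}" "a \<le> card A" "b \<le> card B"
    and "\<forall>x\<in>A. \<forall>y\<in>B. E x y \<and> \<not> red {x, y}"
  shows "has_blue_Kab E red a b"
proof -
  obtain A' B' where "A' \<subseteq> A" "card A' = a" "B' \<subseteq> B" "card B' = b"
    using assms(4,5) by (meson obtain_subset_with_card_n)
  moreover have "finite A'" "finite B'" using assms(1,2) \<open>A' \<subseteq> A\<close> \<open>B' \<subseteq> B\<close> finite_subset by auto
  moreover have "A' \<inter> B' = {}" "\<forall>x\<in>A'. \<forall>y\<in>B'. E x y \<and> \<not> red {x, y}"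
    using assms(3,6) \<open>A' \<subseteq> A\<close> \<open>B' \<subseteq> B\<close> by blast+
  ultimately show ?thesis unfolding has_blue_Kab_def by blast
qed

lemma red_biclique_free_if_no_blue_Kab:
  assumes "finite X" "finite Y" "finite Z" "X \<inter> Y = {}" "X \<inter> Z = {}" "Y \<inter> Z = {}"
    and no_blue: "\<not> has_blue_Kab (tripartite_edge X Y Z) red m1 m2"
  shows "red_biclique_free X Y Z red (min m1 m2) (max m1 m2)"
proof
  fix U W
  assume "finite U" "finite W" and E: "\<forall>u\<in>U. \<forall>w\<in>W. tripartite_edge X Y Z u w"
    and "min m1 m2 \<le> card U" "max m1 m2 \<le> card W"
  show "\<exists>u\<in>U. \<exists>w\<in>W. red {u, w}"
  proof (rule ccontr)
    assume "\<not> ?thesis"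
    then have blue1: "\<forall>u\<in>U. \<forall>w\<in>W. tripartite_edge X Y Z u w \<and> \<not> red {u, w}"
      using E by blast
    have blue2: "\<forall>w\<in>W. \<forall>u\<in>U. tripartite_edge X Y Z w u \<and> \<not> red {w, u}"
    proof (intro ballI)
      fix w u assume "w \<in> W" "u \<in> U"
      then show "tripartite_edge X Y Z w u \<and> \<not> red {w, u}"
        using blue1 tripartite_edge_sym[of X Y Z u w] by (simp add: insert_commute)
    qed
    have "U \<inter> W = {}" using E assms(4-6) unfolding tripartite_edge_def by blast
    then have "has_blue_Kab (tripartite_edge X Y Z) red m1 m2"
      using has_blue_KabI[OF \<open>finite U\<close> \<open>finite W\<close> _ _ _ blue1]
        has_blue_KabI[OF \<open>finite W\<close> \<open>finite U\<close> _ _ _ blue2]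
        \<open>min m1 m2 \<le> card U\<close> \<open>max m1 m2 \<le> card W\<close>
      by (cases "m1 \<le> m2") (auto simp: Int_commute min_def max_def)
    then show False using no_blue by blast
  qed
qed (use assms in auto)

theorem lemma2p8:
  fixes n m1 m2 :: nat
    and X Y Z :: "'a set"
    and red :: "'a set \<Rightarrow> bool"
  assumes "n > 0" "m1 > 0" "m2 > 0"
    and "m2 \<ge> n"
    and "int n \<ge> \<lceil>log 2 (real m1)\<rceil> + \<lceil>log 2 (real m2)\<rceil> + 2"
    and "finite X" "finite Y" "finite Z"
    and "X \<inter> Y = {}" "X \<inter> Z = {}" "Y \<inter> Z = {}"
    and "card X = 32 * m1 + 49 * m2" "card Y = 32 * m1 + 49 * m2"
    and "card Z = m1 + m2 - 1"
  shows "has_red_cycle (tripartite_edge X Y Z) red n \<or>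
         has_blue_Kab (tripartite_edge X Y Z) red m1 m2"
proof (rule disjCI)
  assume "\<not> has_blue_Kab (tripartite_edge X Y Z) red m1 m2"
  then interpret red_biclique_free X Y Z red "min m1 m2" "max m1 m2"
    using red_biclique_free_if_no_blue_Kab assms(6-11) by blast
  obtain a where "1 \<le> a" "min m1 m2 \<le> 2 ^ a" "2 ^ a \<le> 2 * min m1 m2" "2 * a + 2 \<le> n"
    using power_of_two_between_min[OF assms(2-5)] by blast
  moreover have "0 < min m1 m2" "min m1 m2 \<le> max m1 m2" "n \<le> max m1 m2"
    "32 * max m1 m2 + 49 * min m1 m2 \<le> card X" "32 * max m1 m2 + 49 * min m1 m2 \<le> card Y"
    "min m1 m2 + max m1 m2 - 1 \<le> card Z"
    using assms(2-4,12-14) by (auto simp: min_def max_def)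
  ultimately show "has_red_cycle (tripartite_edge X Y Z) red n"
    using red_cycle by blast
qed

end
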